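(* Let $p$ be an odd prime, $e\ge1$, $s\in\mathbb{F}_p^*$, $a\in\mathbb{F}_p$ and $b\in\mathbb{F}_{p^e}$. Let $f\in\mathcal{RF}$ with $\varepsilon\in\{\pm1\}$ the sign of its Walsh transform and $f^*$ its dual. Let $N_s$ be the number of $x\in\mathbb{F}_{p^e}$ with $af(x)+\mathrm{Tr}_{p^e/p}(bx)=s$. If $e$ is even, then $N_s=0$ if $a=0,b=0$; $N_s=p^{e-1}$ if $a=0,b\ne0$; $N_s=p^{e-1}+\frac{\varepsilon(p-1)\sqrt{p^*}^e}{p}$ if $a\ne0$ and $f^*(-b/a)=a^{-1}s$; and $N_s=p^{e-1}-\frac{\varepsilon\sqrt{p^*}^e}{p}$ if $a\ne0$ and $f^*(-b/a)\ne a^{-1}s$. If $e$ is odd, then $N_s=0$ if $a=0,b=0$; $N_s=p^{e-1}$ if $a=0,b\ne0$, or if $a\ne0$ and $f^*(-b/a)=a^{-1}s$; $N_s=p^{e-1}+\frac{\varepsilon\sqrt{p^*}^eG(\eta_0,\lambda_1)}{p}$ if $a\ne0$, $f^*(-b/a)\ne a^{-1}s$ and $\eta_0(f^*(-b/a)-a^{-1}s)=1$; and $N_s=p^{e-1}-\frac{\varepsilon\sqrt{p^*}^eG(\eta_0,\lambda_1)}{p}$ if $a\ne0$, $f^*(-b/a)\ne a^{-1}s$ and $\eta_0(f^*(-b/a)-a^{-1}s)=-1$.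
   Context: $\zeta_p=e^{2\pi i/p}$; $\mathrm{Tr}_{p^e/p}$ is the trace map; $p^*=(-1)^{(p-1)/2}p$ with $\sqrt{p^*}=\sqrt p$ if $p\equiv1\pmod4$ and $\sqrt{-1}\sqrt p$ otherwise; $\eta_0$ is the quadratic character of $\mathbb{F}_p$, $\lambda_1(y)=\zeta_p^y$, and $G(\eta_0,\lambda_1)=\sum_{y\in\mathbb{F}_p^*}\eta_0(y)\zeta_p^y=\sqrt{-1}^{((p-1)/2)^2}\sqrt p$. A function $f:\mathbb{F}_{p^e}\to\mathbb{F}_p$ is weakly regular bent with sign $\varepsilon\in\{\pm1\}$ and dual $f^*:\mathbb{F}_{p^e}\to\mathbb{F}_p$ if $\sum_{x}\zeta_p^{f(x)-\mathrm{Tr}_{p^e/p}(\beta x)}=\varepsilon\sqrt{p^*}^e\zeta_p^{f^*(\beta)}$ for all $\beta\in\mathbb{F}_{p^e}$. $\mathcal{RF}$ is the set of weakly regular bent $f$ with $f(0)=0$ and $f(ax)=a^hf(x)$ for all $a\in\mathbb{F}_p^*$, $x\in\mathbb{F}_{p^e}$, for some positive even integer $h$ with $\gcd(h-1,p-1)=1$. *)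

theory Defs
  imports "HOL-Number_Theory.Number_Theory" "HOL-Analysis.Analysis"
begin

text \<open>F_{p^e} is a finite field type 'a with CARD('a) = p^e.
  F_p is identified with the prime subfield of 'a, i.e. the image of the integers.
  Functions into F_p are functions 'a => 'a with values in the prime subfield.\<close>

definition prime_subfield :: "'a::field set" where
  "prime_subfield = range (of_int :: int \<Rightarrow> 'a)"

definition tr :: "nat \<Rightarrow> nat \<Rightarrow> 'a::field \<Rightarrow> 'a" where
  "tr p e x = (\<Sum>i<e. x ^ (p ^ i))"

definition fp_idx :: "nat \<Rightarrow> 'a::field \<Rightarrow> nat" where
  "fp_idx p y = (THE k. k < p \<and> of_nat k = y)"

definition zeta_pow :: "nat \<Rightarrow> 'a::field \<Rightarrow> complex" where
  "zeta_pow p y = exp (2 * pi * \<i> * of_nat (fp_idx p y) / of_nat p)"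

definition eta0 :: "nat \<Rightarrow> 'a::field \<Rightarrow> int" where
  "eta0 p y = Legendre (int (fp_idx p y)) (int p)"

definition sqrt_pstar :: "nat \<Rightarrow> complex" where
  "sqrt_pstar p = (if p mod 4 = 1 then complex_of_real (sqrt (real p))
                   else \<i> * complex_of_real (sqrt (real p)))"

definition gauss_sum :: "nat \<Rightarrow> 'a::field itself \<Rightarrow> complex" where
  "gauss_sum p T = (\<Sum>y\<in>prime_subfield - {0::'a}. of_int (eta0 p y) * zeta_pow p y)"

definition weakly_regular_bent ::
  "nat \<Rightarrow> nat \<Rightarrow> ('a::{field,finite} \<Rightarrow> 'a) \<Rightarrow> int \<Rightarrow> ('a \<Rightarrow> 'a) \<Rightarrow> bool" where
  "weakly_regular_bent p e f eps fstar \<longleftrightarrow>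
     eps \<in> {1, -1} \<and> (\<forall>x. f x \<in> prime_subfield) \<and> (\<forall>x. fstar x \<in> prime_subfield) \<and>
     (\<forall>\<beta>. (\<Sum>x\<in>UNIV. zeta_pow p (f x - tr p e (\<beta> * x)))
            = of_int eps * sqrt_pstar p ^ e * zeta_pow p (fstar \<beta>))"

definition in_RF ::
  "nat \<Rightarrow> nat \<Rightarrow> ('a::{field,finite} \<Rightarrow> 'a) \<Rightarrow> int \<Rightarrow> ('a \<Rightarrow> 'a) \<Rightarrow> bool" where
  "in_RF p e f eps fstar \<longleftrightarrow>
     weakly_regular_bent p e f eps fstar \<and> f 0 = 0 \<and>
     (\<exists>h::nat. h > 0 \<and> even h \<and> gcd (h - 1) (p - 1) = 1 \<and>
        (\<forall>a\<in>prime_subfield - {0}. \<forall>x. f (a * x) = a ^ h * f x))"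

definition num_sol :: "nat \<Rightarrow> nat \<Rightarrow> ('a::{field,finite} \<Rightarrow> 'a) \<Rightarrow> 'a \<Rightarrow> 'a \<Rightarrow> 'a \<Rightarrow> nat" where
  "num_sol p e f a b s = card {x. a * f x + tr p e (b * x) = s}"

end

theory Submission
  imports Defs "HOL-Computational_Algebra.Polynomial_Factorial"
begin

text \<open>For a \<noteq> 0 the equation says F x = t with F x = f x - Tr(\<beta> x), \<beta> = -b/a and
  t = s/a. The fibre sizes n_j of F satisfy sum_j n_j zeta_p^j = W zeta_p^(f*(\<beta>)), the
  Walsh coefficient of f at \<beta>, with W = eps sqrt_pstar(p)^e. For even e, W is an integer; for odd e
  it is an integer multiple of the Gauss sum G, and G zeta_p^c = sum_j eta_0(j - c) zeta_p^j.
  Either way the right-hand side becomes an integer combination sum_j c_j zeta_p^j. The p-th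
  cyclotomic polynomial is irreducible (Eisenstein), so the only integer relations among
  1, zeta_p, ..., zeta_p^(p-1) are multiples of their sum; hence n_j - c_j is independent of j,
  and sum_j n_j = p^e fixes the constant. Only the Walsh coefficient at \<beta> enters, so the
  homogeneity condition in the definition of RF is not needed.\<close>

(* HOL-Algebra, imported through Defs, overloads these names for abstract rings. *)
hide_const (open) up_ring.coeff up_ring.monom module.smult

section \<open>Integer relations between the p-th roots of unity\<close>

lemma pcompose_power: "pcompose (q ^ n) r = pcompose q r ^ n"
  by (induction n) (simp_all add: pcompose_mult pcompose_1)

lemma is_unit_pcompose_linear_iff:
  fixes a q :: "'a::idom poly"
  assumes "degree q = 1"
  shows "pcompose a q dvd 1 \<longleftrightarrow> a dvd 1"
proof
  assume "pcompose a q dvd 1"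
  then obtain c where "pcompose a q = [:c:]" by (auto simp: is_unit_poly_iff)
  then have "degree a = 0" using degree_pcompose[of a q] assms by simp
  then obtain c where "a = [:c:]" by (elim degree_eq_zeroE)
  with \<open>pcompose a q dvd 1\<close> show "a dvd 1" by simp
next
  assume "a dvd 1"
  then obtain c where "a = [:c:]" by (auto simp: is_unit_poly_iff)
  with \<open>a dvd 1\<close> show "pcompose a q dvd 1" by simp
qed

lemma irreducible_of_irreducible_pcompose_linear:
  fixes g q :: "'a::idom poly"
  assumes irr: "irreducible (pcompose g q)" and q: "degree q = 1"
  shows "irreducible g"
proof (rule irreducibleI)
  show "g \<noteq> 0" using irr by auto
  show "\<not> g dvd 1" using irr is_unit_pcompose_linear_iff[OF q] by (auto dest: irreducible_not_unit)
  fix a b assume "g = a * b"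
  then have "pcompose g q = pcompose a q * pcompose b q" by (simp add: pcompose_mult)
  with irr show "a dvd 1 \<or> b dvd 1"
    by (auto dest: irreducibleD simp: is_unit_pcompose_linear_iff[OF q])
qed

lemma eisenstein_cofactor_degree_0:
  fixes a b :: "int poly" and q :: int
  assumes q: "prime q" and ab: "\<not> q dvd lead_coeff (a * b)" and b0: "\<not> q dvd coeff b 0"
    and low: "\<forall>k<degree (a * b). q dvd coeff (a * b) k"
  shows "degree b = 0"
proof -
  have "a \<noteq> 0" "b \<noteq> 0" using ab by auto
  have "\<not> q dvd lead_coeff a" using ab by (auto simp: lead_coeff_mult)
  define r where "r = (LEAST r. \<not> q dvd coeff a r)"
  have r: "\<not> q dvd coeff a r" unfolding r_def by (rule LeastI) (fact \<open>\<not> q dvd lead_coeff a\<close>)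
  have "r \<le> degree a" unfolding r_def by (rule Least_le) (fact \<open>\<not> q dvd lead_coeff a\<close>)
  have below_r: "q dvd coeff a i" if "i < r" for i
    using that not_less_Least unfolding r_def by blast
  \<comment> \<open>In the r-th coefficient of a * b only the summand with i = r is not divisible by q.\<close>
  have "coeff (a * b) r = (\<Sum>i<r. coeff a i * coeff b (r - i)) + coeff a r * coeff b 0"
    by (simp add: coeff_mult lessThan_Suc_atMost[symmetric])
  moreover have "q dvd (\<Sum>i<r. coeff a i * coeff b (r - i))"
    by (intro dvd_sum) (simp add: below_r)
  moreover have "\<not> q dvd coeff a r * coeff b 0" using q r b0 by (simp add: prime_dvd_mult_iff)
  ultimately have "\<not> q dvd coeff (a * b) r" by (simp add: dvd_add_right_iff)
  with low have "degree (a * b) \<le> r" by (meson not_less)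
  with \<open>r \<le> degree a\<close> \<open>a \<noteq> 0\<close> \<open>b \<noteq> 0\<close> show ?thesis by (simp add: degree_mult_eq)
qed

theorem eisenstein_irreducible:
  fixes g :: "int poly" and q :: int
  assumes q: "prime q" and monic: "lead_coeff g = 1" and pos: "degree g > 0"
    and low: "\<forall>k<degree g. q dvd coeff g k" and const: "\<not> q\<^sup>2 dvd coeff g 0"
  shows "irreducible g"
proof (rule irreducibleI)
  show "g \<noteq> 0" using monic by auto
  show "\<not> is_unit g" using pos by (auto simp: is_unit_poly_iff)
  have unit: "is_unit b" if gab: "g = a * b" and "\<not> q dvd coeff b 0" for a b
  proof -
    have "\<not> q dvd lead_coeff g" using q not_prime_unit monic by auto
    then have "degree b = 0"
      using eisenstein_cofactor_degree_0[OF q _ that(2)] low gab by simp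
    then obtain c where c: "b = [:c:]" by (elim degree_eq_zeroE)
    have "lead_coeff a * lead_coeff b = 1" using monic by (simp only: gab lead_coeff_mult)
    then have "lead_coeff a * c = 1" using c by simp
    then have "c dvd 1" by (metis dvd_triv_right)
    then show ?thesis using c by (simp add: is_unit_poly_iff)
  qed
  fix a b assume gab: "g = a * b"
  have g0: "coeff g 0 = coeff a 0 * coeff b 0" by (simp add: gab coeff_mult)
  have "\<not> q dvd coeff a 0 \<or> \<not> q dvd coeff b 0"
    using const g0 by (auto simp: power2_eq_square intro: mult_dvd_mono)
  then show "is_unit a \<or> is_unit b"
  proof
    assume "\<not> q dvd coeff a 0"
    with gab show ?thesis using unit[of b a] by (simp add: mult.commute)
  next
    assume "\<not> q dvd coeff b 0"
    with gab show ?thesis using unit[of a b] by blast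
  qed
qed

definition geometric_poly :: "nat \<Rightarrow> int poly" where
  "geometric_poly n = (\<Sum>k<n. monom 1 k)"

lemma coeff_geometric_poly: "coeff (geometric_poly n) k = (if k < n then 1 else 0)"
  by (simp add: geometric_poly_def coeff_sum)

lemma degree_geometric_poly:
  assumes "n > 0" shows "degree (geometric_poly n) = n - 1"
proof (rule antisym)
  show "degree (geometric_poly n) \<le> n - 1" by (rule degree_le) (auto simp: coeff_geometric_poly)
  show "n - 1 \<le> degree (geometric_poly n)" by (rule le_degree) (use assms in \<open>simp add: coeff_geometric_poly\<close>)
qed

lemma geometric_poly_times_X_minus_1: "geometric_poly n * [:-1, 1:] = monom 1 n - 1"
proof (rule poly_eqI)
  fix k
  have "geometric_poly n * [:-1, 1:] = pCons 0 (geometric_poly n) - geometric_poly n"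
    by (simp add: mult_pCons_right)
  then show "coeff (geometric_poly n * [:-1, 1:]) k = coeff (monom 1 n - 1) k"
    by (cases k) (auto simp: coeff_geometric_poly coeff_pCons coeff_1)
qed

lemma coeff_geometric_poly_shift:
  "coeff (pcompose (geometric_poly n) [:1, 1:]) k = int (n choose (k + 1))"
proof -
  have "pcompose [:-1, 1:] [:1, 1::int:] = [:0, 1:]" by (simp add: pcompose_pCons)
  then have "pcompose (geometric_poly n) [:1, 1:] * [:0, 1:] = pcompose (geometric_poly n * [:-1, 1:]) [:1, 1:]"
    by (simp only: pcompose_mult)
  also have "\<dots> = pcompose (monom 1 n - 1) [:1, 1:]" by (simp only: geometric_poly_times_X_minus_1)
  also have "\<dots> = [:1, 1:] ^ n - 1"
    by (simp add: pcompose_diff pcompose_1 monom_altdef pcompose_power pcompose_pCons)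
  finally have shift: "pcompose (geometric_poly n) [:1, 1:] * [:0, 1:] = [:1, 1:] ^ n - 1" .
  have "coeff (pcompose (geometric_poly n) [:1, 1:]) k = coeff (pcompose (geometric_poly n) [:1, 1:] * [:0, 1:]) (Suc k)"
    by (simp add: mult_pCons_right coeff_pCons)
  also have "\<dots> = coeff ([:1, 1:] ^ n - 1) (Suc k)" by (simp only: shift)
  also have "\<dots> = int (n choose (k + 1))"
  proof (cases "Suc k \<le> n")
    case True then show ?thesis by (simp add: coeff_1 coeff_linear_poly_power)
  next
    case False
    then show ?thesis by (simp add: coeff_1 coeff_eq_0 degree_linear_power binomial_eq_0)
  qed
  finally show ?thesis .
qed

lemma irreducible_geometric_poly:
  assumes p: "prime p" shows "irreducible (geometric_poly p)"
proof (rule irreducible_of_irreducible_pcompose_linear)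
  let ?g = "pcompose (geometric_poly p) [:1, 1:]"
  have "p > 1" using p prime_gt_1_nat by blast
  then have deg: "degree ?g = p - 1" by (simp add: degree_pcompose degree_geometric_poly)
  show "irreducible ?g"
  proof (rule eisenstein_irreducible[of "int p"])
    show "prime (int p)" using p by simp
    show "lead_coeff ?g = 1" using deg \<open>p > 1\<close> by (simp add: coeff_geometric_poly_shift)
    show "degree ?g > 0" using deg \<open>p > 1\<close> by simp
    show "\<forall>k<degree ?g. int p dvd coeff ?g k"
      using deg p by (auto simp: coeff_geometric_poly_shift intro: dvd_choose_prime)
    have "coeff ?g 0 = int p" by (simp only: coeff_geometric_poly_shift) simp
    then show "\<not> (int p)\<^sup>2 dvd coeff ?g 0" using \<open>p > 1\<close> by (simp add: power2_eq_square)
  qed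
qed simp

lemma map_poly_of_int_diff:
  "map_poly (of_int :: int \<Rightarrow> 'a::comm_ring_1) (P - Q) = map_poly of_int P - map_poly of_int Q"
  by (intro poly_eqI) (simp add: coeff_map_poly)

lemma map_poly_of_int_mult:
  "map_poly (of_int :: int \<Rightarrow> 'a::comm_ring_1) (P * Q) = map_poly of_int P * map_poly of_int Q"
  by (intro poly_eqI) (simp add: coeff_map_poly coeff_mult)

lemma map_poly_of_int_sum:
  "map_poly (of_int :: int \<Rightarrow> 'a::comm_ring_1) (sum f A) = (\<Sum>k\<in>A. map_poly of_int (f k))"
  by (intro poly_eqI) (simp add: coeff_map_poly coeff_sum)

lemma poly_map_poly_of_int_sum_monom:
  "poly (map_poly (of_int :: int \<Rightarrow> 'a::comm_ring_1) (\<Sum>k<n. monom (m k) k)) z = (\<Sum>k<n. of_int (m k) * z ^ k)"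
  by (simp add: map_poly_of_int_sum map_poly_monom poly_sum poly_monom)

lemma fract_poly_dvd_if_least_degree_root:
  fixes B P :: "int poly" and z :: "'a::comm_ring_1"
  assumes Bz: "poly (map_poly of_int B) z = 0" and B0: "B \<noteq> 0"
    and least: "\<And>R. R \<noteq> 0 \<Longrightarrow> poly (map_poly of_int R) z = 0 \<Longrightarrow> degree B \<le> degree R"
    and Pz: "poly (map_poly of_int P) z = 0"
  shows "fract_poly B dvd fract_poly P"
proof -
  obtain Q R where qr: "pseudo_divmod P B = (Q, R)" by (cases "pseudo_divmod P B") auto
  define c where "c = lead_coeff B ^ (Suc (degree P) - degree B)"
  have "c \<noteq> 0" using B0 by (simp add: c_def)
  have PBQR: "smult c P = B * Q + R" using pseudo_divmod(1)[OF B0 qr] by (simp add: c_def)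
  then have "R = smult c P - B * Q" by simp
  then have "poly (map_poly of_int R) z = 0"
    by (simp add: map_poly_of_int_diff map_poly_of_int_mult map_poly_smult Pz Bz)
  then have "R = 0" using pseudo_divmod(2)[OF B0 qr] least by force
  with PBQR have "smult (to_fract c) (fract_poly P) = fract_poly B * fract_poly Q"
    by (metis fract_poly_mult fract_poly_smult add_0_right)
  then have "fract_poly P = fract_poly B * smult (inverse (to_fract c)) (fract_poly Q)"
    using \<open>c \<noteq> 0\<close> by (metis mult_smult_right smult_smult left_inverse smult_1_left to_fract_eq_0_iff)
  then show ?thesis by (rule dvdI)
qed

lemma degree_ge_if_common_root_geometric_poly:
  fixes A :: "int poly" and z :: "'a::{comm_ring_1,ring_char_0}"
  assumes p: "prime p" and A0: "A \<noteq> 0" and Az: "poly (map_poly of_int A) z = 0"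
    and Gz: "poly (map_poly of_int (geometric_poly p)) z = 0"
  shows "p - 1 \<le> degree A"
proof -
  have "p > 1" using p prime_gt_1_nat by blast
  have "content (geometric_poly p) dvd 1"
    using content_dvd_coeff[of "geometric_poly p" 0] \<open>p > 1\<close> by (simp add: coeff_geometric_poly)
  then have content: "content (geometric_poly p) = 1" using is_unit_content_iff by blast
  have "degree (geometric_poly p) \<noteq> 0" using \<open>p > 1\<close> by (simp add: degree_geometric_poly)
  then have irr: "irreducible (fract_poly (geometric_poly p))"
    using nonconst_poly_irreducible_iff irreducible_geometric_poly[OF p] by blast
  let ?root = "\<lambda>R :: int poly. R \<noteq> 0 \<and> poly (map_poly of_int R) z = 0"
  obtain B where B: "?root B" and least: "\<And>R. ?root R \<Longrightarrow> degree B \<le> degree R"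
    using ex_has_least_nat[of ?root A degree] A0 Az by blast
  have "fract_poly B dvd fract_poly (geometric_poly p)"
    using B least by (intro fract_poly_dvd_if_least_degree_root[OF _ _ _ Gz]) auto
  then consider "is_unit (fract_poly B)" | "fract_poly (geometric_poly p) dvd fract_poly B"
    using irreducibleD'[OF irr] by blast
  then show ?thesis
  proof cases
    case 1
    then obtain c where "fract_poly B = [:c:]" by (auto simp: is_unit_poly_iff)
    then have "degree B = 0" by (metis degree_map_poly degree_pCons_0 to_fract_eq_0_iff)
    then obtain d where "B = [:d:]" by (elim degree_eq_zeroE)
    with B show ?thesis by (simp add: map_poly_pCons)
  next
    case 2
    with content have "geometric_poly p dvd B" by (intro fract_poly_dvdD)
    then have "degree (geometric_poly p) \<le> degree B" using B by (intro dvd_imp_degree_le) auto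
    also have "degree B \<le> degree A" using least A0 Az by blast
    finally show ?thesis using \<open>p > 1\<close> by (simp add: degree_geometric_poly)
  qed
qed

theorem int_relation_prime_root_of_unity:
  fixes z :: "'a::field_char_0" and m :: "nat \<Rightarrow> int"
  assumes p: "prime p" and zp: "z ^ p = 1" and z1: "z \<noteq> 1"
    and rel: "(\<Sum>k<p. of_int (m k) * z ^ k) = 0" and k: "k < p"
  shows "m k = m 0"
proof -
  have "p > 1" using p prime_gt_1_nat by blast
  have geom: "(\<Sum>k<p. z ^ k) = 0" using z1 zp by (simp add: sum_gp_strict)
  then have Gz: "poly (map_poly of_int (geometric_poly p)) z = 0"
    by (simp add: geometric_poly_def poly_map_poly_of_int_sum_monom)
  \<comment> \<open>Subtracting m (p - 1) times the relation geom gives one of degree at most p - 2.\<close>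
  define A where "A = (\<Sum>k<p. monom (m k - m (p - 1)) k)"
  have coeff_A: "coeff A i = (if i < p then m i - m (p - 1) else 0)" for i
    by (simp add: A_def coeff_sum)
  have "poly (map_poly of_int A) z = (\<Sum>k<p. of_int (m k - m (p - 1)) * z ^ k)"
    by (simp only: A_def poly_map_poly_of_int_sum_monom)
  also have "\<dots> = (\<Sum>k<p. of_int (m k) * z ^ k) - of_int (m (p - 1)) * (\<Sum>k<p. z ^ k)"
    by (simp add: sum_subtractf sum_distrib_left left_diff_distrib mult.assoc)
  finally have Az: "poly (map_poly of_int A) z = 0" using rel geom by simp
  have "degree A \<le> p - 2"
  proof (rule degree_le, intro allI impI)
    fix i assume "p - 2 < i"
    then have "i = p - 1 \<or> p \<le> i" by linarith
    then show "coeff A i = 0" by (auto simp: coeff_A)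
  qed
  have "A = 0"
  proof (rule ccontr)
    assume "A \<noteq> 0"
    then have "p - 1 \<le> degree A" by (rule degree_ge_if_common_root_geometric_poly[OF p _ Az Gz])
    with \<open>degree A \<le> p - 2\<close> \<open>p > 1\<close> show False by linarith
  qed
  then have eq: "m i = m (p - 1)" if "i < p" for i using coeff_A[of i] that by simp
  show ?thesis using eq[OF k] eq[of 0] \<open>p > 1\<close> by simp
qed


section \<open>The prime subfield and the trace\<close>

lemma prime_subfield_add: "x \<in> prime_subfield \<Longrightarrow> y \<in> prime_subfield \<Longrightarrow> x + y \<in> prime_subfield"
  by (auto simp: prime_subfield_def) (metis of_int_add rangeI)

lemma prime_subfield_uminus: "x \<in> prime_subfield \<Longrightarrow> - x \<in> prime_subfield"
  by (auto simp: prime_subfield_def) (metis of_int_minus rangeI)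

lemma prime_subfield_diff: "x \<in> prime_subfield \<Longrightarrow> y \<in> prime_subfield \<Longrightarrow> x - y \<in> prime_subfield"
  by (auto simp: prime_subfield_def) (metis of_int_diff rangeI)

lemma prime_subfield_mult: "x \<in> prime_subfield \<Longrightarrow> y \<in> prime_subfield \<Longrightarrow> x * y \<in> prime_subfield"
  by (auto simp: prime_subfield_def) (metis of_int_mult rangeI)

lemma prime_subfield_of_nat [simp]: "of_nat k \<in> prime_subfield"
  by (auto simp: prime_subfield_def intro!: image_eqI[of _ _ "int k"])

lemma prime_subfield_0 [simp]: "0 \<in> prime_subfield" and prime_subfield_1 [simp]: "1 \<in> prime_subfield"
  using prime_subfield_of_nat[of 0] prime_subfield_of_nat[of 1] by simp_all

locale prime_power_field =
  fixes p e :: nat and field_type :: "'a::{field,finite} itself"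
  assumes prime: "prime p" and e_pos: "e \<ge> 1" and card_field: "CARD('a) = p ^ e"
begin

abbreviation Fp :: "'a set" where "Fp \<equiv> prime_subfield"

lemma p_gt_1: "p > 1"
  using prime prime_gt_1_nat by blast

lemma CHAR_field: "CHAR('a) = p"
proof -
  have "prime CHAR('a)" by (rule prime_CHAR_semidom[OF finite_imp_CHAR_pos]) simp
  moreover have "CHAR('a) dvd p ^ e" using CHAR_dvd_CARD[where ?'a='a] card_field by simp
  ultimately show ?thesis using prime prime_dvd_power primes_dvd_imp_eq by blast
qed

lemma of_nat_eq_of_nat_iff: "(of_nat a :: 'a) = of_nat b \<longleftrightarrow> a mod p = b mod p"
  using of_nat_eq_iff_cong_CHAR[where ?'a='a] by (simp add: CHAR_field Cong.cong_def)

lemma of_int_eq_of_int_iff: "(of_int a :: 'a) = of_int b \<longleftrightarrow> a mod int p = b mod int p"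
  using of_int_eq_iff_cong_CHAR[where ?'a='a] by (simp add: CHAR_field Cong.cong_def)

lemma add_power_p_power: "((x::'a) + y) ^ (p ^ i) = x ^ (p ^ i) + y ^ (p ^ i)"
  using freshmans_dream'[where ?'a='a] CHAR_field prime by simp

lemma sum_power_p: "(sum (g :: 'b \<Rightarrow> 'a) A) ^ p = (\<Sum>i\<in>A. g i ^ p)"
  using freshmans_dream_sum[where ?'a='a] CHAR_field prime by simp

lemma power_card_field: "(x::'a) ^ (p ^ e) = x"
proof (cases "x = 0")
  case False
  \<comment> \<open>Multiplication by x permutes the nonzero elements.\<close>
  have "(\<Prod>y\<in>UNIV-{0}. x * y) = (\<Prod>y\<in>UNIV-{0::'a}. y)"
    by (rule prod.reindex_bij_witness[of _ "\<lambda>y. y / x" "\<lambda>y. x * y"]) (use False in auto)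
  moreover have "(\<Prod>y\<in>UNIV-{0}. x * y) = x ^ (CARD('a) - 1) * (\<Prod>y\<in>UNIV-{0::'a}. y)"
    by (simp add: prod.distrib card_Diff_singleton)
  moreover have "(\<Prod>y\<in>UNIV-{0::'a}. y) \<noteq> 0" by simp
  ultimately have "x ^ (CARD('a) - 1) = 1" by simp
  moreover have "Suc (CARD('a) - 1) = CARD('a)" by (simp add: finite_UNIV_card_ge_0)
  ultimately show ?thesis using card_field by (metis power_Suc mult.right_neutral)
qed (use p_gt_1 in simp)

lemma prime_subfield_eq: "Fp = of_nat ` {..<p}"
proof (intro equalityI subsetI)
  fix y :: 'a assume "y \<in> Fp"
  then obtain k where k: "y = of_int k" by (auto simp: prime_subfield_def)
  have "y = of_int (int (nat (k mod int p)))"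
    using k p_gt_1 by (simp add: of_int_eq_of_int_iff)
  then have "y = of_nat (nat (k mod int p))" by simp
  then show "y \<in> of_nat ` {..<p}" using p_gt_1
    by (intro image_eqI[of _ _ "nat (k mod int p)"]) (auto simp: nat_less_iff)
qed auto

lemma inj_on_of_nat_field: "inj_on (of_nat :: nat \<Rightarrow> 'a) {..<p}"
  by (rule inj_onI) (simp add: of_nat_eq_of_nat_iff)

lemma card_prime_subfield: "card Fp = p"
  by (simp add: prime_subfield_eq card_image[OF inj_on_of_nat_field])

lemma sum_prime_subfield: "(\<Sum>y\<in>Fp. g y) = (\<Sum>k<p. g (of_nat k))"
  by (simp add: prime_subfield_eq sum.reindex[OF inj_on_of_nat_field])

lemma prime_subfieldE:
  assumes "(y :: 'a) \<in> Fp"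
  obtains k where "k < p" "y = of_nat k"
  using assms prime_subfield_eq by auto

lemma of_nat_power_p: "(of_nat k :: 'a) ^ p = of_nat k"
proof (induction k)
  case (Suc k)
  have "(of_nat (Suc k) :: 'a) ^ p = (of_nat k + 1) ^ (p ^ 1)" by (simp add: add.commute)
  also have "\<dots> = of_nat (Suc k)" by (simp only: add_power_p_power) (simp add: Suc)
  finally show ?case .
qed (use p_gt_1 in simp)

lemma prime_subfield_iff: "(y :: 'a) \<in> Fp \<longleftrightarrow> y ^ p = y"
proof
  show "y ^ p = y" if "y \<in> Fp"
    using that by (elim prime_subfieldE) (simp add: of_nat_power_p)
  \<comment> \<open>X^p - X has at most p roots, and the p elements of Fp are among them.\<close>
  define Q :: "'a poly" where "Q = monom 1 p - [:0, 1:]"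
  have "coeff Q p = 1" using p_gt_1 by (simp add: Q_def coeff_pCons split: nat.splits)
  then have "Q \<noteq> 0" by auto
  have "degree Q \<le> p"
    unfolding Q_def using p_gt_1 by (intro degree_le) (auto simp: coeff_pCons split: nat.splits)
  moreover have "{x. poly Q x = 0} = {x. x ^ p = x}" by (auto simp: Q_def poly_monom)
  ultimately have "card {x::'a. x ^ p = x} \<le> p" using card_poly_roots_bound[OF \<open>Q \<noteq> 0\<close>] by simp
  moreover have "Fp \<subseteq> {x::'a. x ^ p = x}"
    by (auto elim!: prime_subfieldE simp: of_nat_power_p)
  ultimately have "Fp = {x::'a. x ^ p = x}"
    using card_prime_subfield card_mono[of "{x::'a. x ^ p = x}" Fp]
    by (intro card_subset_eq) auto
  then show "y \<in> Fp" if "y ^ p = y" using that by auto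
qed

lemma prime_subfield_inverse: "x \<in> Fp \<Longrightarrow> inverse (x::'a) \<in> Fp"
  by (simp add: prime_subfield_iff power_inverse)

lemma prime_subfield_divide:
  "x \<in> Fp \<Longrightarrow> y \<in> Fp \<Longrightarrow> (x::'a) / y \<in> Fp"
  by (simp add: divide_inverse prime_subfield_mult prime_subfield_inverse)

lemma power_p_power_prime_subfield: "y \<in> Fp \<Longrightarrow> y ^ (p ^ i) = y"
  by (induction i) (simp_all add: power_mult prime_subfield_iff mult.commute[of p])

lemma fp_idx_of_nat: "fp_idx p (of_nat k :: 'a) = k mod p"
  unfolding fp_idx_def
proof (rule the_equality)
  show "k mod p < p \<and> (of_nat (k mod p) :: 'a) = of_nat k"
    using p_gt_1 by (simp add: of_nat_eq_of_nat_iff)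
  show "k' = k mod p" if "k' < p \<and> (of_nat k' :: 'a) = of_nat k" for k'
    using that by (simp add: of_nat_eq_of_nat_iff) (metis mod_less)
qed

lemma tr_0: "tr p e (0 :: 'a) = 0"
  using p_gt_1 by (simp add: tr_def power_0_left)

lemma tr_add: "tr p e (x + y :: 'a) = tr p e x + tr p e y"
  by (simp add: tr_def add_power_p_power sum.distrib)

lemma tr_diff: "tr p e (x - y :: 'a) = tr p e x - tr p e y"
  using tr_add[of "x - y" y] by simp

lemma tr_mult_prime_subfield: "c \<in> Fp \<Longrightarrow> tr p e (c * x) = c * tr p e x"
  by (simp add: tr_def power_mult_distrib power_p_power_prime_subfield sum_distrib_left)

lemma tr_in_prime_subfield: "tr p e (x::'a) \<in> Fp"
proof -
  \<comment> \<open>The p-th power map shifts the conjugates x^(p^i) cyclically, since x^(p^e) = x.\<close>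
  have "(tr p e x) ^ p = (\<Sum>i<e. x ^ (p ^ Suc i))"
    by (simp add: tr_def sum_power_p power_mult[symmetric] mult.commute)
  also have "\<dots> = (\<Sum>i<e. x ^ (p ^ i))"
    using sum.lessThan_Suc_shift[of "\<lambda>i. x ^ (p ^ i)" e] sum.lessThan_Suc[of "\<lambda>i. x ^ (p ^ i)" e]
    by (simp add: power_card_field)
  finally show ?thesis by (simp add: prime_subfield_iff tr_def)
qed

lemma tr_not_identically_zero: "\<exists>x::'a. tr p e x \<noteq> 0"
proof (rule ccontr)
  assume "\<not> (\<exists>x::'a. tr p e x \<noteq> 0)"
  \<comment> \<open>Then every element is a root of a nonzero polynomial of degree p^(e-1) < p^e.\<close>
  define T :: "'a poly" where "T = (\<Sum>i<e. monom 1 (p ^ i))"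
  have roots: "UNIV = {x::'a. poly T x = 0}"
    using \<open>\<not> (\<exists>x. tr p e x \<noteq> 0)\<close> by (auto simp: T_def tr_def poly_sum poly_monom)
  have power_le: "p ^ i \<le> p ^ (e - 1)" if "i < e" for i
    using that p_gt_1 by (intro power_increasing) auto
  have coeff_T: "coeff T n = (\<Sum>i<e. if p ^ i = n then 1 else 0)" for n
    by (simp add: T_def coeff_sum)
  have "coeff T (p ^ (e - 1)) = 1"
    using e_pos p_gt_1 by (simp add: coeff_T sum.delta)
  then have "T \<noteq> 0" by auto
  have "degree T \<le> p ^ (e - 1)"
    by (rule degree_le) (force simp: coeff_T intro!: sum.neutral dest: power_le)
  then have "CARD('a) \<le> p ^ (e - 1)"
    using card_poly_roots_bound[OF \<open>T \<noteq> 0\<close>] roots by simp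
  moreover have "p ^ (e - 1) < p ^ e" using p_gt_1 e_pos by (intro power_strict_increasing) auto
  ultimately show False using card_field by simp
qed

lemma card_tr_fibre:
  assumes s: "s \<in> Fp"
  shows "card {x::'a. tr p e x = s} = p ^ (e - 1)"
proof -
  \<comment> \<open>All fibres are translates of the kernel.\<close>
  have translate: "card {x::'a. tr p e x = t} = card {x::'a. tr p e x = 0}"
    if t: "t \<in> Fp" for t
  proof -
    obtain x0 :: 'a where x0: "tr p e x0 \<noteq> 0" using tr_not_identically_zero by blast
    define w where "w = (t / tr p e x0) * x0"
    have "tr p e w = t" unfolding w_def
      using x0 t by (subst tr_mult_prime_subfield) (auto intro!: prime_subfield_divide tr_in_prime_subfield)
    then have "bij_betw (\<lambda>x. x + w) {x. tr p e x = 0} {x. tr p e x = t}"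
      by (intro bij_betw_byWitness[of _ "\<lambda>y. y - w"]) (auto simp: tr_add tr_diff)
    then show ?thesis by (simp add: bij_betw_same_card)
  qed
  have "(\<Union>t\<in>Fp. {x. tr p e x = t}) = UNIV"
    using tr_in_prime_subfield by blast
  then have "CARD('a) = card (\<Union>t\<in>Fp. {x. tr p e x = t})" by simp
  also have "\<dots> = (\<Sum>t\<in>Fp. card {x. tr p e x = t})"
    by (rule card_UN_disjoint) auto
  also have "\<dots> = (\<Sum>t\<in>Fp. card {x::'a. tr p e x = 0})"
    by (intro sum.cong refl) (rule translate)
  also have "\<dots> = p * card {x::'a. tr p e x = 0}" by (simp add: card_prime_subfield)
  finally have "p * p ^ (e - 1) = p * card {x::'a. tr p e x = 0}"
    using card_field e_pos by (cases e) auto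
  then show ?thesis using translate[OF s] p_gt_1 by simp
qed

lemma card_tr_mult_fibre:
  assumes b: "b \<noteq> 0" and s: "s \<in> Fp"
  shows "card {x::'a. tr p e (b * x) = s} = p ^ (e - 1)"
proof -
  have "bij_betw (\<lambda>y. y / b) {y::'a. tr p e y = s} {x::'a. tr p e (b * x) = s}"
    by (rule bij_betw_byWitness[of _ "\<lambda>x. b * x"]) (use b in auto)
  then show ?thesis using card_tr_fibre[OF s] by (simp add: bij_betw_same_card)
qed


lemma sum_prime_subfield_translate:
  assumes "c \<in> Fp"
  shows "(\<Sum>y\<in>Fp. g (y + c)) = (\<Sum>y\<in>Fp. g y)"
  by (rule sum.reindex_bij_witness[of _ "\<lambda>z. z - c" "\<lambda>y. y + c"])
    (use assms in \<open>auto intro: prime_subfield_add prime_subfield_diff\<close>)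

lemma sum_prime_subfield_dilate:
  assumes "c \<in> Fp" "c \<noteq> 0"
  shows "(\<Sum>y\<in>Fp. g (c * y)) = (\<Sum>y\<in>Fp. g y)"
  by (rule sum.reindex_bij_witness[of _ "\<lambda>z. z / c" "\<lambda>y. c * y"])
    (use assms in \<open>auto intro: prime_subfield_mult prime_subfield_divide\<close>)

end


section \<open>Additive and quadratic characters\<close>

lemma sum_comp_eq_sum_card_fibres:
  fixes F :: "'a::finite \<Rightarrow> 'b" and g :: "'b \<Rightarrow> 'c::comm_semiring_1"
  assumes "finite S" "range F \<subseteq> S"
  shows "(\<Sum>x\<in>UNIV. g (F x)) = (\<Sum>j\<in>S. of_nat (card {x. F x = j}) * g j)"
proof -
  have "(\<Sum>x\<in>UNIV. g (F x)) = (\<Sum>j\<in>S. \<Sum>x\<in>{x. x \<in> UNIV \<and> F x = j}. g (F x))"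
    using assms by (intro sum.group[symmetric]) auto
  also have "\<dots> = (\<Sum>j\<in>S. of_nat (card {x. F x = j}) * g j)" by simp
  finally show ?thesis .
qed

definition zeta :: "nat \<Rightarrow> complex" where
  "zeta n = exp (2 * pi * \<i> / of_nat n)"

lemma zeta_power: "zeta n ^ k = exp (2 * pi * \<i> * of_nat k / of_nat n)"
  unfolding zeta_def exp_of_nat_mult[symmetric] by (simp add: ac_simps)

lemma zeta_power_eq_1: "n > 0 \<Longrightarrow> zeta n ^ n = 1"
  by (simp add: zeta_power)

lemma zeta_neq_1: "n > 1 \<Longrightarrow> zeta n \<noteq> 1"
  using complex_root_unity_eq_1[of n 1] zeta_power[of n 1] by simp

definition pstar :: "nat \<Rightarrow> int" where
  "pstar p = (-1) ^ ((p - 1) div 2) * int p"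

lemma sqrt_pstar_square: "odd p \<Longrightarrow> sqrt_pstar p ^ 2 = of_int (pstar p)"
proof (cases "p mod 4 = 1")
  case True
  then have "even ((p - 1) div 2)" by presburger
  with True show ?thesis by (simp add: sqrt_pstar_def pstar_def power_mult_distrib flip: of_real_power)
next
  case False
  moreover assume "odd p"
  ultimately have "odd ((p - 1) div 2)" by presburger
  with False show ?thesis by (simp add: sqrt_pstar_def pstar_def power_mult_distrib flip: of_real_power)
qed

lemma sqrt_pstar_power_even:
  assumes "odd p" "even n" shows "sqrt_pstar p ^ n = of_int (pstar p ^ (n div 2))"
proof -
  have "sqrt_pstar p ^ n = (sqrt_pstar p ^ 2) ^ (n div 2)"
    using assms(2) by (simp flip: power_mult)
  then show ?thesis by (simp add: sqrt_pstar_square[OF assms(1)])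
qed

context prime_power_field
begin

lemma zeta_pow_of_nat: "zeta_pow p (of_nat k :: 'a) = zeta p ^ k"
proof -
  have "zeta_pow p (of_nat k :: 'a) = exp (2 * pi * \<i> * of_nat (k mod p) / of_nat p)"
    by (simp add: zeta_pow_def fp_idx_of_nat)
  also have "\<dots> = exp (2 * pi * \<i> * of_nat k / of_nat p)"
    using complex_root_unity_eq[of p "k mod p" k] p_gt_1 by simp
  finally show ?thesis by (simp add: zeta_power)
qed

lemma zeta_pow_0: "zeta_pow p (0 :: 'a) = 1"
  using zeta_pow_of_nat[of 0] by simp

lemma zeta_pow_add:
  "x \<in> Fp \<Longrightarrow> y \<in> Fp \<Longrightarrow>
    zeta_pow p (x + y) = zeta_pow p x * zeta_pow p y"
  by (elim prime_subfieldE) (simp add: zeta_pow_of_nat power_add flip: of_nat_add)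

lemma sum_zeta_pow_mult:
  assumes c: "c \<in> Fp"
  shows "(\<Sum>y\<in>Fp. zeta_pow p (c * y)) = (if c = 0 then of_nat p else 0)"
proof (cases "c = 0")
  case True
  then show ?thesis by (simp add: zeta_pow_0 card_prime_subfield)
next
  case False
  with c have "(\<Sum>y\<in>Fp. zeta_pow p (c * y)) = (\<Sum>y\<in>Fp. zeta_pow p y)"
    by (rule sum_prime_subfield_dilate[of c "zeta_pow p"])
  also have "\<dots> = (\<Sum>k<p. zeta p ^ k)" by (simp add: sum_prime_subfield zeta_pow_of_nat)
  also have "\<dots> = 0"
    using zeta_neq_1[OF p_gt_1] zeta_power_eq_1 p_gt_1 by (simp add: sum_gp_strict)
  finally show ?thesis using False by simp
qed

lemma sum_zeta_pow_mult_nonzero: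
  assumes "c \<in> Fp"
  shows "(\<Sum>x\<in>Fp - {0}. zeta_pow p (c * x)) = (if c = 0 then of_nat p else 0) - 1"
  using sum.remove[of Fp 0 "\<lambda>x. zeta_pow p (c * x)"] sum_zeta_pow_mult[OF assms]
  by (simp add: zeta_pow_0)

theorem int_relation_zeta_pow:
  assumes "(\<Sum>j\<in>Fp. of_int (m j) * zeta_pow p (j :: 'a)) = 0" and "j \<in> Fp"
  shows "m j = m 0"
proof -
  have "(\<Sum>k<p. of_int (m (of_nat k)) * zeta p ^ k) = 0"
    using assms(1) by (simp add: sum_prime_subfield zeta_pow_of_nat)
  moreover obtain k where "k < p" "j = of_nat k" using assms(2) by (elim prime_subfieldE)
  ultimately show ?thesis
    using int_relation_prime_root_of_unity[OF prime zeta_power_eq_1 zeta_neq_1[OF p_gt_1],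
        of "\<lambda>k. m (of_nat k)" k] p_gt_1 by simp
qed

theorem card_fibre_of_char_sum:
  fixes F :: "'a \<Rightarrow> 'a" and c :: "'a \<Rightarrow> int"
  assumes F: "\<forall>x. F x \<in> Fp" and t: "t \<in> Fp"
    and char_sum: "(\<Sum>x\<in>UNIV. zeta_pow p (F x)) = (\<Sum>j\<in>Fp. of_int (c j) * zeta_pow p j)"
  shows "of_nat (card {x. F x = t}) =
    of_nat (p ^ (e - 1)) + of_int (c t) - of_int (\<Sum>j\<in>Fp. c j) / (of_nat p :: complex)"
proof -
  define n where "n j = card {x. F x = j}" for j
  define m where "m j = int (n j) - c j" for j
  have "(\<Sum>x\<in>UNIV. zeta_pow p (F x)) = (\<Sum>j\<in>Fp. of_nat (n j) * zeta_pow p j)"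
    unfolding n_def using F by (intro sum_comp_eq_sum_card_fibres) auto
  then have "(\<Sum>j\<in>Fp. of_int (m j) * zeta_pow p j) = 0"
    using char_sum by (simp add: m_def left_diff_distrib sum_subtractf)
  then have m_const: "m j = m 0" if "j \<in> Fp" for j
    using that by (rule int_relation_zeta_pow)
  have "p ^ e = (\<Sum>j\<in>Fp. n j)"
    using sum_comp_eq_sum_card_fibres[of Fp F "\<lambda>_. 1 :: nat"] F card_field
    by (auto simp: n_def)
  then have "int p ^ e = (\<Sum>j\<in>Fp. int (n j))" by (simp flip: of_nat_power)
  then have "int p ^ e - (\<Sum>j\<in>Fp. c j) = (\<Sum>j\<in>Fp. m j)"
    by (simp add: m_def sum_subtractf)
  also have "\<dots> = (\<Sum>j\<in>Fp. m 0)" by (rule sum.cong[OF refl m_const])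
  finally have "int p ^ e - (\<Sum>j\<in>Fp. c j) = int p * m 0" by (simp add: card_prime_subfield)
  then have "(of_int (int p ^ e - (\<Sum>j\<in>Fp. c j)) :: complex) = of_int (int p * m 0)" by simp
  then have "of_nat p * of_int (m 0) = (of_nat p ^ e - of_int (\<Sum>j\<in>Fp. c j) :: complex)" by simp
  also have "(of_nat p ^ e :: complex) = of_nat p * of_nat (p ^ (e - 1))"
    using e_pos by (cases e) auto
  finally have "of_int (m 0) = of_nat (p ^ (e - 1)) - of_int (\<Sum>j\<in>Fp. c j) / (of_nat p :: complex)"
    using p_gt_1 by (simp add: field_simps)
  moreover have "int (card {x. F x = t}) = m 0 + c t" using m_const[OF t] by (simp add: m_def n_def)
  then have "(of_nat (card {x. F x = t}) :: complex) = of_int (m 0) + of_int (c t)"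
    by (metis of_int_add of_int_of_nat_eq)
  ultimately show ?thesis by simp
qed

end

locale odd_prime_power_field = prime_power_field +
  assumes odd: "odd p"
begin

lemma p_gt_2: "p > 2"
  using odd p_gt_1 by (cases "p = 2") auto

lemma of_int_eta0: "y \<in> Fp \<Longrightarrow> of_int (eta0 p y) = y ^ ((p - 1) div 2)"
proof (elim prime_subfieldE)
  fix k assume "k < p" "y = of_nat k"
  have "[Legendre (int k) (int p) = int k ^ ((p - 1) div 2)] (mod int p)"
    using euler_criterion[OF prime p_gt_2] by blast
  then have "(of_int (Legendre (int k) (int p)) :: 'a) = of_int (int k ^ ((p - 1) div 2))"
    by (simp only: of_int_eq_of_int_iff Cong.cong_def)
  then show "of_int (eta0 p y) = y ^ ((p - 1) div 2)"
    using \<open>k < p\<close> \<open>y = of_nat k\<close> by (simp add: eta0_def fp_idx_of_nat)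
qed

lemma eta0_range: "eta0 p (y :: 'a) \<in> {-1, 0, 1}"
  by (simp add: eta0_def Legendre_def)

lemma inj_on_of_int_signs: "inj_on (of_int :: int \<Rightarrow> 'a) {-1, 0, 1}"
proof (rule inj_onI)
  fix a b :: int assume ab: "a \<in> {-1, 0, 1}" "b \<in> {-1, 0, 1}" and "(of_int a :: 'a) = of_int b"
  then have "int p dvd a - b" by (simp add: of_int_eq_of_int_iff mod_eq_dvd_iff)
  moreover have "\<bar>a - b\<bar> < int p" using ab p_gt_2 by auto
  ultimately show "a = b" using dvd_imp_le_int[of "a - b" "int p"] by fastforce
qed

lemma eta0_0: "eta0 p (0 :: 'a) = 0"
  using fp_idx_of_nat[of 0] by (simp add: eta0_def Legendre_def)

lemma eta0_mult:
  assumes "x \<in> Fp" "y \<in> Fp"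
  shows "eta0 p (x * y) = eta0 p x * eta0 p y"
proof (rule inj_onD[OF inj_on_of_int_signs])
  show "(of_int (eta0 p (x * y)) :: 'a) = of_int (eta0 p x * eta0 p y)"
    using assms by (simp add: of_int_eta0 prime_subfield_mult power_mult_distrib)
  show "eta0 p (x * y) \<in> {-1, 0, 1}" by (rule eta0_range)
  show "eta0 p x * eta0 p y \<in> {-1, 0, 1}" using eta0_range[of x] eta0_range[of y] by auto
qed

lemma eta0_nonzero:
  assumes "x \<in> Fp" "x \<noteq> 0"
  shows "eta0 p x \<in> {-1, 1}"
proof -
  have "(of_int (eta0 p x) :: 'a) \<noteq> 0" using assms by (simp add: of_int_eta0)
  then show ?thesis using eta0_range[of x] by auto
qed

lemma eta0_minus_1: "eta0 p (-1 :: 'a) = (-1) ^ ((p - 1) div 2)"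
proof (rule inj_onD[OF inj_on_of_int_signs])
  show "(of_int (eta0 p (-1 :: 'a)) :: 'a) = of_int ((-1) ^ ((p - 1) div 2))"
    by (simp add: of_int_eta0 prime_subfield_uminus)
  show "eta0 p (-1 :: 'a) \<in> {-1, 0, 1}" by (rule eta0_range)
  show "(-1) ^ ((p - 1) div 2) \<in> {-1, 0, 1 :: int}" by (cases "even ((p - 1) div 2)") auto
qed

lemma exists_nonresidue: "\<exists>g\<in>Fp. eta0 p g = -1"
proof -
  define h where "h = (p - 1) div 2"
  have "h > 0" "h < p - 1" using p_gt_2 odd by (auto simp: h_def elim!: oddE)
  \<comment> \<open>There are at most h < p - 1 roots of X^h - 1.\<close>
  define Q :: "'a poly" where "Q = monom 1 h - 1"
  have "coeff Q h = 1" using \<open>h > 0\<close> by (simp add: Q_def coeff_1)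
  then have "Q \<noteq> 0" by auto
  have "degree Q \<le> h" unfolding Q_def by (intro degree_le) (auto simp: coeff_1)
  moreover have "{x. poly Q x = 0} = {x. x ^ h = 1}" by (auto simp: Q_def poly_monom)
  ultimately have "card {x::'a. x ^ h = 1} < card (Fp - {0::'a})"
    using card_poly_roots_bound[OF \<open>Q \<noteq> 0\<close>] \<open>h < p - 1\<close>
    by (simp add: card_prime_subfield card_Diff_singleton)
  then have "\<not> Fp - {0} \<subseteq> {x::'a. x ^ h = 1}"
    using card_mono[of "{x::'a. x ^ h = 1}" "Fp - {0}"] by auto
  then obtain g where g: "g \<in> Fp" "g \<noteq> 0" "g ^ h \<noteq> 1" by blast
  then have "eta0 p g \<noteq> 1" using of_int_eta0[of g] by (auto simp: h_def)
  then show ?thesis using eta0_nonzero[OF g(1,2)] g(1) by auto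
qed

lemma sum_eta0: "(\<Sum>y\<in>Fp. eta0 p (y :: 'a)) = 0"
proof -
  obtain g where g: "g \<in> Fp" "eta0 p g = -1"
    using exists_nonresidue by blast
  then have "g \<noteq> 0" using eta0_0 by auto
  have "(\<Sum>y\<in>Fp. eta0 p y) = (\<Sum>y\<in>Fp. eta0 p (g * y))"
    by (rule sum_prime_subfield_dilate[OF g(1) \<open>g \<noteq> 0\<close>, of "eta0 p", symmetric])
  also have "\<dots> = (\<Sum>y\<in>Fp. - eta0 p y)"
    by (rule sum.cong) (simp_all add: eta0_mult g)
  also have "\<dots> = - (\<Sum>y\<in>Fp. eta0 p y)" by (simp add: sum_negf)
  finally show ?thesis by simp
qed


lemma gauss_sum_eq: "gauss_sum p TYPE('a) = (\<Sum>y\<in>Fp. of_int (eta0 p y) * zeta_pow p y)"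
  unfolding gauss_sum_def by (rule sum.mono_neutral_left) (auto simp: eta0_0)

theorem gauss_sum_square: "gauss_sum p TYPE('a) ^ 2 = of_int (pstar p)"
proof -
  define G where "G = gauss_sum p TYPE('a)"
  define \<eta> where "\<eta> y = (of_int (eta0 p y) :: complex)" for y :: 'a
  have twist: "\<eta> x * zeta_pow p x * G = (\<Sum>t\<in>Fp. \<eta> t * zeta_pow p ((1 + t) * x))"
    if x: "x \<in> Fp - {0}" for x
  proof -
    have "x \<in> Fp" "x \<noteq> 0" using x by auto
    have "G = (\<Sum>t\<in>Fp. \<eta> (x * t) * zeta_pow p (x * t))"
      unfolding G_def gauss_sum_eq \<eta>_def
      by (rule sum_prime_subfield_dilate[symmetric]) fact+
    moreover have "\<eta> x * zeta_pow p x * (\<eta> (x * t) * zeta_pow p (x * t))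
        = \<eta> t * zeta_pow p ((1 + t) * x)" if "t \<in> Fp" for t
    proof -
      have "eta0 p x * eta0 p (x * t) = eta0 p t"
        using eta0_mult[OF \<open>x \<in> Fp\<close> that] eta0_nonzero[OF \<open>x \<in> Fp\<close> \<open>x \<noteq> 0\<close>] by auto
      moreover have "zeta_pow p x * zeta_pow p (x * t) = zeta_pow p ((1 + t) * x)"
        using zeta_pow_add[OF \<open>x \<in> Fp\<close> prime_subfield_mult[OF \<open>x \<in> Fp\<close> that]]
        by (simp add: algebra_simps)
      ultimately show ?thesis unfolding \<eta>_def by (metis of_int_mult mult.commute mult.left_commute)
    qed
    ultimately show ?thesis by (simp add: sum_distrib_left)
  qed
  have "G ^ 2 = (\<Sum>x\<in>Fp - {0}. \<eta> x * zeta_pow p x * G)"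
    by (simp add: power2_eq_square G_def gauss_sum_def \<eta>_def sum_distrib_right)
  also have "\<dots> = (\<Sum>t\<in>Fp. \<eta> t * (\<Sum>x\<in>Fp - {0}. zeta_pow p ((1 + t) * x)))"
    by (simp add: twist sum_distrib_left sum.swap[of _ "Fp - {0}"])
  also have "\<dots> = (\<Sum>t\<in>Fp. (if t = -1 then \<eta> t * of_nat p else 0) - \<eta> t)"
  proof (rule sum.cong[OF refl])
    fix t assume "t \<in> Fp"
    then have "1 + t \<in> Fp" by (simp add: prime_subfield_add)
    moreover have "1 + t = 0 \<longleftrightarrow> t = -1" by (auto simp: add_eq_0_iff)
    ultimately show "\<eta> t * (\<Sum>x\<in>Fp - {0}. zeta_pow p ((1 + t) * x))
        = (if t = -1 then \<eta> t * of_nat p else 0) - \<eta> t"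
      by (simp add: sum_zeta_pow_mult_nonzero right_diff_distrib)
  qed
  also have "\<dots> = \<eta> (-1) * of_nat p - (\<Sum>t\<in>Fp. \<eta> t)"
    by (simp add: sum_subtractf sum.delta prime_subfield_uminus)
  also have "(\<Sum>t\<in>Fp. \<eta> t) = 0"
    using sum_eta0 unfolding \<eta>_def by (metis of_int_0 of_int_sum)
  finally show ?thesis by (simp add: G_def \<eta>_def eta0_minus_1 pstar_def)
qed

lemma sqrt_pstar_eq_gauss_sum: "sqrt_pstar p = gauss_sum p TYPE('a) \<or> sqrt_pstar p = - gauss_sum p TYPE('a)"
  using power2_eq_iff[of "sqrt_pstar p" "gauss_sum p TYPE('a)"] gauss_sum_square sqrt_pstar_square[OF odd]
  by simp

lemma gauss_sum_mult_zeta_pow: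
  assumes c: "c \<in> Fp"
  shows "gauss_sum p TYPE('a) * zeta_pow p c = (\<Sum>z\<in>Fp. of_int (eta0 p (z - c)) * zeta_pow p z)"
proof -
  have "gauss_sum p TYPE('a) * zeta_pow p c = (\<Sum>y\<in>Fp. of_int (eta0 p ((y + c) - c)) * zeta_pow p (y + c))"
    using c by (simp add: gauss_sum_eq sum_distrib_right zeta_pow_add mult.assoc)
  also have "\<dots> = (\<Sum>z\<in>Fp. of_int (eta0 p (z - c)) * zeta_pow p z)"
    using c by (rule sum_prime_subfield_translate)
  finally show ?thesis .
qed

lemma sqrt_pstar_power_odd:
  assumes "odd n"
  obtains K :: int where "sqrt_pstar p ^ n = of_int K * gauss_sum p TYPE('a)"
proof -
  have "sqrt_pstar p ^ n = sqrt_pstar p ^ (n - 1) * sqrt_pstar p"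
    using assms by (simp flip: power_Suc2)
  then have power: "sqrt_pstar p ^ n = of_int (pstar p ^ ((n - 1) div 2)) * sqrt_pstar p"
    using assms by (simp add: sqrt_pstar_power_even[OF odd])
  from sqrt_pstar_eq_gauss_sum show ?thesis
  proof
    assume "sqrt_pstar p = gauss_sum p TYPE('a)"
    then show ?thesis using power that[of "pstar p ^ ((n - 1) div 2)"] by simp
  next
    assume "sqrt_pstar p = - gauss_sum p TYPE('a)"
    then show ?thesis using power that[of "- (pstar p ^ ((n - 1) div 2))"] by simp
  qed
qed


section \<open>Value distribution of weakly regular bent functions\<close>

context
  fixes F :: "'a \<Rightarrow> 'a" and fs :: 'a and eps :: int
  assumes F: "\<forall>x. F x \<in> Fp" and fs: "fs \<in> Fp"
    and walsh: "(\<Sum>x\<in>UNIV. zeta_pow p (F x)) = of_int eps * sqrt_pstar p ^ e * zeta_pow p fs"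
begin

theorem card_fibre_even:
  assumes t: "t \<in> Fp" and "even e"
  shows "of_nat (card {x. F x = t}) =
    (if t = fs then of_nat (p ^ (e - 1)) + of_int eps * sqrt_pstar p ^ e * (of_nat p - 1) / of_nat p
     else of_nat (p ^ (e - 1)) - of_int eps * sqrt_pstar p ^ e / of_nat p)"
proof -
  define W where "W = eps * pstar p ^ (e div 2)"
  have W: "of_int eps * sqrt_pstar p ^ e = of_int W"
    using \<open>even e\<close> by (simp add: W_def sqrt_pstar_power_even[OF odd])
  define c where "c j = (if j = fs then W else 0)" for j
  have "(\<Sum>x\<in>UNIV. zeta_pow p (F x)) = (\<Sum>j\<in>Fp. if j = fs then of_int W * zeta_pow p j else 0)"
    using fs by (simp add: walsh W)
  also have "\<dots> = (\<Sum>j\<in>Fp. of_int (c j) * zeta_pow p j)"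
    by (intro sum.cong) (auto simp: c_def)
  finally have char_sum: "(\<Sum>x\<in>UNIV. zeta_pow p (F x)) = (\<Sum>j\<in>Fp. of_int (c j) * zeta_pow p j)" .
  have "(of_nat (card {x. F x = t}) :: complex)
      = of_nat (p ^ (e - 1)) + of_int (c t) - of_int (\<Sum>j\<in>Fp. c j) / of_nat p"
    by (rule card_fibre_of_char_sum[OF F t char_sum])
  also have "(\<Sum>j\<in>Fp. c j) = W" using fs by (simp add: c_def)
  finally have "(of_nat (card {x. F x = t}) :: complex)
      = of_nat (p ^ (e - 1)) + of_int (c t) - of_int W / of_nat p" .
  then show ?thesis using p_gt_1 by (cases "t = fs") (simp_all add: W c_def field_simps)
qed

theorem card_fibre_odd:
  assumes t: "t \<in> Fp" and "odd e"
  shows "of_nat (card {x. F x = t}) = of_nat (p ^ (e - 1))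
    + of_int (eta0 p (fs - t)) * (of_int eps * sqrt_pstar p ^ e * gauss_sum p TYPE('a) / of_nat p)"
proof -
  define G where "G = gauss_sum p TYPE('a)"
  obtain L :: int where "sqrt_pstar p ^ e = of_int L * G"
    using sqrt_pstar_power_odd[OF \<open>odd e\<close>] unfolding G_def .
  define K where "K = eps * L"
  then have W: "of_int eps * sqrt_pstar p ^ e = of_int K * G"
    using \<open>sqrt_pstar p ^ e = of_int L * G\<close> by (simp add: mult.assoc)
  \<comment> \<open>The Walsh coefficient K G zeta_p^fs is an integer combination of the zeta_p^j.\<close>
  define c where "c j = K * eta0 p (j - fs)" for j
  have "(\<Sum>x\<in>UNIV. zeta_pow p (F x)) = of_int K * (G * zeta_pow p fs)"
    by (simp add: walsh W mult.assoc)
  also have "\<dots> = (\<Sum>j\<in>Fp. of_int (c j) * zeta_pow p j)"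
    by (simp add: c_def G_def gauss_sum_mult_zeta_pow[OF fs] sum_distrib_left mult.assoc)
  finally have char_sum: "(\<Sum>x\<in>UNIV. zeta_pow p (F x)) = (\<Sum>j\<in>Fp. of_int (c j) * zeta_pow p j)" .
  have "(of_nat (card {x. F x = t}) :: complex)
      = of_nat (p ^ (e - 1)) + of_int (c t) - of_int (\<Sum>j\<in>Fp. c j) / of_nat p"
    by (rule card_fibre_of_char_sum[OF F t char_sum])
  also have "(\<Sum>j\<in>Fp. c j) = 0"
    using sum_prime_subfield_translate[OF fs, of "\<lambda>j. eta0 p (j - fs)"] sum_eta0
    by (simp add: c_def flip: sum_distrib_left)
  finally have "(of_nat (card {x. F x = t}) :: complex)
      = of_nat (p ^ (e - 1)) + of_int K * of_int (eta0 p (t - fs))"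
    by (simp add: c_def)
  moreover have "eta0 p (t - fs) = (-1) ^ ((p - 1) div 2) * eta0 p (fs - t)"
    using eta0_mult[OF prime_subfield_uminus[OF prime_subfield_1] prime_subfield_diff[OF fs t]]
    by (simp add: eta0_minus_1)
  moreover have "of_int K * G * G / of_nat p = of_int (K * (-1) ^ ((p - 1) div 2))"
    using gauss_sum_square p_gt_1 by (simp add: G_def pstar_def power2_eq_square field_simps)
  ultimately show ?thesis by (simp add: W G_def algebra_simps)
qed

end

end

lemma (in prime_power_field) num_sol_zero_zero:
  fixes f :: "'a \<Rightarrow> 'a"
  assumes "s \<noteq> 0" shows "num_sol p e f 0 0 s = 0"
  using assms by (simp add: num_sol_def tr_0)

lemma (in prime_power_field) num_sol_zero:
  fixes f :: "'a \<Rightarrow> 'a"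
  assumes "b \<noteq> 0" "s \<in> Fp" shows "num_sol p e f 0 b s = p ^ (e - 1)"
  using card_tr_mult_fibre[OF assms] by (simp add: num_sol_def)

lemma (in prime_power_field) num_sol_eq_card_fibre:
  fixes f :: "'a \<Rightarrow> 'a"
  assumes a: "a \<in> Fp" "a \<noteq> 0"
  shows "num_sol p e f a b s = card {x. f x - tr p e ((- b / a) * x) = inverse a * s}"
  unfolding num_sol_def
proof (intro arg_cong[where f = card] Collect_cong)
  fix x
  have "tr p e (b * x) = tr p e ((- a) * ((- b / a) * x))" using a by simp
  also have "\<dots> = - a * tr p e ((- b / a) * x)"
    by (rule tr_mult_prime_subfield) (simp add: prime_subfield_uminus a)
  finally have "a * f x + tr p e (b * x) = a * (f x - tr p e ((- b / a) * x))"
    by (simp add: algebra_simps)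
  then show "a * f x + tr p e (b * x) = s \<longleftrightarrow> f x - tr p e ((- b / a) * x) = inverse a * s"
    using a by (auto simp: field_simps)
qed

theorem lemma4p1:
  fixes p e :: nat and f fstar :: "'a::{field,finite} \<Rightarrow> 'a" and eps :: int
    and s a b :: 'a
  assumes "prime p" and "odd p" and "e \<ge> 1" and "CARD('a) = p ^ e"
    and "s \<in> prime_subfield" and "s \<noteq> 0" and "a \<in> prime_subfield"
    and "in_RF p e f eps fstar"
  shows "let N = of_nat (num_sol p e f a b s) :: complex;
             q = of_nat (p ^ (e - 1)) :: complex;
             W = of_int eps * sqrt_pstar p ^ e;
             G = gauss_sum p TYPE('a);
             c = fstar (- b / a) - inverse a * s
         in (even e \<longrightarrow>
               (a = 0 \<and> b = 0 \<longrightarrow> N = 0) \<and>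
               (a = 0 \<and> b \<noteq> 0 \<longrightarrow> N = q) \<and>
               (a \<noteq> 0 \<and> c = 0 \<longrightarrow> N = q + W * (of_nat p - 1) / of_nat p) \<and>
               (a \<noteq> 0 \<and> c \<noteq> 0 \<longrightarrow> N = q - W / of_nat p)) \<and>
            (odd e \<longrightarrow>
               (a = 0 \<and> b = 0 \<longrightarrow> N = 0) \<and>
               (a = 0 \<and> b \<noteq> 0 \<longrightarrow> N = q) \<and>
               (a \<noteq> 0 \<and> c = 0 \<longrightarrow> N = q) \<and>
               (a \<noteq> 0 \<and> c \<noteq> 0 \<and> eta0 p c = 1 \<longrightarrow> N = q + W * G / of_nat p) \<and>
               (a \<noteq> 0 \<and> c \<noteq> 0 \<and> eta0 p c = -1 \<longrightarrow> N = q - W * G / of_nat p))"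
proof -
  interpret odd_prime_power_field p e "TYPE('a)"
    using assms(1-4) by unfold_locales auto
  define \<beta> where "\<beta> = - b / a"
  define t where "t = inverse a * s"
  define F where "F x = f x - tr p e (\<beta> * x)" for x
  have "weakly_regular_bent p e f eps fstar" using assms(8) by (simp add: in_RF_def)
  then have F: "\<forall>x. F x \<in> Fp" and fs: "fstar \<beta> \<in> Fp"
    and walsh: "(\<Sum>x\<in>UNIV. zeta_pow p (F x)) = of_int eps * sqrt_pstar p ^ e * zeta_pow p (fstar \<beta>)"
    by (auto simp: weakly_regular_bent_def F_def intro: prime_subfield_diff tr_in_prime_subfield)
  have t: "t \<in> Fp" using assms(5,7) by (simp add: t_def prime_subfield_mult prime_subfield_inverse)
  have N: "num_sol p e f a b s = card {x. F x = t}" if "a \<noteq> 0"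
    using num_sol_eq_card_fibre[OF assms(7) that] by (simp add: F_def \<beta>_def t_def)
  show ?thesis
    using card_fibre_even[OF F fs walsh t] card_fibre_odd[OF F fs walsh t] N eta0_0
      num_sol_zero_zero[OF assms(6)] num_sol_zero[OF _ assms(5)]
    by (auto simp: Let_def \<beta>_def t_def)
qed

end
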